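(* Let $X$ be a non-empty finite set and let $f,g\colon X\to X$ be maps. Then $d_X(f\circ g,\mathrm{Id}_X)=d_X(g\circ f,\mathrm{Id}_X)$.
   Context: $d_X$ denotes the Hamming metric on maps $X\to X$: $d_X(h,k)=|\{x\in X : h(x)\ne k(x)\}|/|X|$. *)

theory Defs
  imports Main Complex_Main
begin

definition hamming_dist :: "'a set \<Rightarrow> ('a \<Rightarrow> 'a) \<Rightarrow> ('a \<Rightarrow> 'a) \<Rightarrow> real" where
  "hamming_dist X h k = real (card {x \<in> X. h x \<noteq> k x}) / real (card X)"

end

theory Submission
  imports Defs
begin

text \<open>The map \<open>g\<close> restricts to a bijection from the fixed points of \<open>f \<circ> g\<close> onto those of
  \<open>g \<circ> f\<close>, with inverse \<open>f\<close>; so both compositions move the same number of points of \<open>X\<close>.\<close>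

lemma bij_betw_fixpoints_comp_swap:
  assumes "f ` X \<subseteq> X" and "g ` X \<subseteq> X"
  shows "bij_betw g {x \<in> X. f (g x) = x} {x \<in> X. g (f x) = x}"
  by (rule bij_betw_byWitness[where f' = f]) (use assms in auto)

lemma card_fixpoints_comp_swap:
  assumes "f ` X \<subseteq> X" and "g ` X \<subseteq> X"
  shows "card {x \<in> X. (f \<circ> g) x = x} = card {x \<in> X. (g \<circ> f) x = x}"
  using bij_betw_same_card[OF bij_betw_fixpoints_comp_swap[OF assms]] by simp

lemma card_moved_points_comp_swap:
  assumes "finite X" and "f ` X \<subseteq> X" and "g ` X \<subseteq> X"
  shows "card {x \<in> X. (f \<circ> g) x \<noteq> x} = card {x \<in> X. (g \<circ> f) x \<noteq> x}"
proof -
  have moved: "{x \<in> X. h x \<noteq> x} = X - {x \<in> X. h x = x}" for h :: "'a \<Rightarrow> 'a"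
    by auto
  show ?thesis
    unfolding moved using assms card_fixpoints_comp_swap[OF assms(2,3)]
    by (simp add: card_Diff_subset finite_subset)
qed

theorem lemma5p2:
  fixes X :: "'a set" and f g :: "'a \<Rightarrow> 'a"
  assumes "finite X" and "X \<noteq> {}"
    and "f ` X \<subseteq> X" and "g ` X \<subseteq> X"
  shows "hamming_dist X (f \<circ> g) id = hamming_dist X (g \<circ> f) id"
  using card_moved_points_comp_swap[OF assms(1,3,4)] by (simp add: hamming_dist_def)

end
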